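(* Let $p\in\mathbb{N}$ and let $\gamma^*$ be a DAG on $[p]$. Suppose the random vector $X=(X_1,\dots,X_p)^{\mathrm T}$ is generated by the linear structural equation model \[X_j = X_{\mathrm{pa}^*(j)}^{\mathrm T}\beta_j^* + \epsilon_j,\qquad j\in[p],\] where $\mathrm{pa}^*(j)$ is the parent set of $j$ in $\gamma^*$, every entry of $\beta_j^*\in\mathbb{R}^{|\mathrm{pa}^*(j)|}$ is non-zero, and $\epsilon_1,\dots,\epsilon_p$ are independent with $E(\epsilon_j)=0$ and $\mathrm{var}(\epsilon_j)=\sigma^2$ for all $j$, for a common $\sigma^2>0$. For every DAG $\gamma$ on $[p]$ define \[ r_j^\gamma := \min_{\beta_j\in\mathbb{R}^{|\mathrm{pa}^\gamma(j)|}} E\big(X_j - X_{\mathrm{pa}^\gamma(j)}^{\mathrm T}\beta_j\big)^2,\quad j\in[p],\qquad r^\gamma:=\sum_{j=1}^p r_j^\gamma ,\] (with $r_j^\gamma = E(X_j^2)$ when $\mathrm{pa}^\gamma(j)=\emptyset$), and write $r^* := r^{\gamma^*}$. Then for every DAG $\gamma$ on $[p]$, $r^\gamma\ge r^*$ $(=p\sigma^2)$, and equality holds if and only if $\gamma\supseteq\gamma^*$, i.e. every directed edge of $\gamma^*$ is an edge of $\gamma$.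
   Context: A DAG on $[p]=\{1,\dots,p\}$ is a pair $([p],E)$ with $E\subset[p]\times[p]$ a set of directed edges containing no directed cycle; $(k,j)\in E$ means $k$ is a parent of $j$, and $\mathrm{pa}^\gamma(j)$ denotes the set of parents of $j$ in $\gamma$. For $x\in\mathbb{R}^p$ and $I\subset[p]$, $x_I$ is the subvector $(x_k)_{k\in I}$. $\gamma'\supseteq\gamma$ means the edge set of $\gamma'$ contains that of $\gamma$. Expectations are under the true data-generating distribution of the model. *)

theory Defs
  imports "HOL-Probability.Probability"
begin

definition is_dag :: "nat \<Rightarrow> (nat \<times> nat) set \<Rightarrow> bool" where
  "is_dag p E \<longleftrightarrow> E \<subseteq> {1..p} \<times> {1..p} \<and> acyclic E"

definition pa :: "(nat \<times> nat) set \<Rightarrow> nat \<Rightarrow> nat set" where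
  "pa E j = {k. (k, j) \<in> E}"

text \<open>A coefficient vector in R^|pa(j)| is represented by a function beta :: nat => real,
  of which only the values on pa(j) matter.\<close>
definition resid_risk :: "'a measure \<Rightarrow> (nat \<Rightarrow> 'a \<Rightarrow> real) \<Rightarrow> (nat \<times> nat) set \<Rightarrow> nat \<Rightarrow> real" where
  "resid_risk M X E j =
     (INF beta \<in> (UNIV :: (nat \<Rightarrow> real) set).
        integral\<^sup>L M (\<lambda>\<omega>. (X j \<omega> - (\<Sum>k\<in>pa E j. beta k * X k \<omega>))\<^sup>2))"

definition total_risk :: "'a measure \<Rightarrow> (nat \<Rightarrow> 'a \<Rightarrow> real) \<Rightarrow> nat \<Rightarrow> (nat \<times> nat) set \<Rightarrow> real" where
  "total_risk M X p E = (\<Sum>j=1..p. resid_risk M X E j)"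

end

(*
  Write X = A eps, where a j is the coefficient vector of X_j in the noise. As the noise is
  white with variance sigma2, E (X_j - sum_k beta_k X_k)^2 = sigma2 |a_j - sum_k beta_k a_k|^2,
  so r_j is sigma2 times the squared distance of a_j from the span of the a_k, k a parent of j.
  Along a topological order of a DAG the parents of each node precede it, so its r dominates
  sigma2 times the sum of the successive Gram-Schmidt distances of the a_j in that order. Their
  product is the Gram determinant of the a_j, which is 1 because A is unitriangular up to a
  permutation, hence by AM-GM the sum is at least p. Equality forces all these distances to be 1;
  this makes the order topological for the true DAG as well, and then uniqueness of the
  regression coefficients (the a_k are linearly independent) shows that every true parent is a
  parent in the DAG. Conversely, if the DAG contains the true one, the true coefficients leave
  the residual e_j, so each distance is at most 1.
*)

theory Submission
  imports Defs
begin

section \<open>Topological orders\<close>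

fun topo_order :: "(nat \<times> nat) set \<Rightarrow> nat set \<Rightarrow> nat list \<Rightarrow> bool" where
  "topo_order R V [] \<longleftrightarrow> True"
| "topo_order R V (x # xs) \<longleftrightarrow> pa R x \<subseteq> V \<and> topo_order R (insert x V) xs"

lemma topo_order_append:
  "topo_order R V (xs @ ys) \<longleftrightarrow> topo_order R V xs \<and> topo_order R (V \<union> set xs) ys"
  by (induction xs arbitrary: V) (auto simp: insert_commute)

lemma topo_order_mono: "topo_order R V xs \<Longrightarrow> V \<subseteq> W \<Longrightarrow> topo_order R W xs"
proof (induction xs arbitrary: V W)
  case (Cons x xs)
  then show ?case
    using Cons.IH[of "insert x V" "insert x W"] by auto
qed simp

lemma topo_order_exists:
  assumes "finite T" "wf R" "\<forall>x\<in>T. pa R x \<subseteq> V \<union> T"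
  shows "\<exists>xs. distinct xs \<and> set xs = T \<and> topo_order R V xs"
  using assms
proof (induction "card T" arbitrary: T V rule: less_induct)
  case less
  show ?case
  proof (cases "T = {}")
    case True
    then show ?thesis by auto
  next
    case False
    then obtain x where x: "x \<in> T" and minimal: "\<And>y. (y, x) \<in> R \<Longrightarrow> y \<notin> T"
      using wfE_min[OF less.prems(2)] by blast
    have "card (T - {x}) < card T"
      using card_Diff1_less[OF less.prems(1) x] .
    moreover have "\<forall>z\<in>T - {x}. pa R z \<subseteq> insert x V \<union> (T - {x})"
      using less.prems(3) by auto
    ultimately obtain xs where "distinct xs" "set xs = T - {x}" "topo_order R (insert x V) xs"
      using less.hyps[of "T - {x}" "insert x V"] less.prems(1,2) by blast
    moreover have "pa R x \<subseteq> V"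
      using less.prems(3) x minimal by (auto simp: pa_def)
    ultimately show ?thesis
      using x by (intro exI[of _ "x # xs"]) auto
  qed
qed

lemma ln_prod_list: "\<forall>t\<in>set ts. t > 0 \<Longrightarrow> ln (prod_list ts) = sum_list (map ln ts)"
  for ts :: "real list"
proof (induction ts)
  case (Cons t ts)
  have "0 \<notin> set ts"
    using Cons.prems by auto
  then have "prod_list ts \<noteq> 0"
    by (simp add: prod_list_zero_iff)
  with Cons show ?case
    by (simp add: ln_mult)
qed simp

lemma length_le_sum_list_if_prod_list_eq_one:
  fixes ts :: "real list"
  assumes pos: "\<forall>t\<in>set ts. t > 0" and prod: "prod_list ts = 1"
  shows "real (length ts) \<le> sum_list ts"
    and "sum_list ts = real (length ts) \<Longrightarrow> \<forall>t\<in>set ts. t = 1"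
proof -
  \<comment> \<open>AM-GM through the inequality ln t \<le> t - 1\<close>
  let ?gap = "map (\<lambda>t. t - 1 - ln t) ts"
  have gap: "sum_list ts - length ts = sum_list ?gap"
    using ln_prod_list[OF pos] prod by (simp add: sum_list_subtractf sum_list_triv)
  have gap_nonneg: "u \<ge> 0" if "u \<in> set ?gap" for u
    using that pos ln_le_minus_one by fastforce
  then have "0 \<le> sum_list ?gap"
    by (rule sum_list_nonneg)
  then show "real (length ts) \<le> sum_list ts"
    using gap by linarith
  assume "sum_list ts = real (length ts)"
  then have "\<forall>u\<in>set ?gap. u = 0"
    using gap gap_nonneg sum_list_nonneg_eq_0_iff[of ?gap] by auto
  then show "\<forall>t\<in>set ts. t = 1"
    using pos ln_eq_minus_one by fastforce
qed

lemma prod_list_ge_one: "\<forall>t\<in>set ts. (1::real) \<le> t \<Longrightarrow> 1 \<le> prod_list ts"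
  by (induction ts) (auto intro: order_trans[OF _ mult_mono, of 1 1 1, simplified])

lemma all_one_if_prod_list_eq_one:
  "\<forall>t\<in>set ts. (1::real) \<le> t \<Longrightarrow> prod_list ts = 1 \<Longrightarrow> \<forall>t\<in>set ts. t = 1"
proof (induction ts)
  case Nil
  then show ?case by simp
next
  case (Cons t ts)
  have t: "1 \<le> t" and p: "1 \<le> prod_list ts" and tp: "t * prod_list ts = 1"
    using Cons.prems prod_list_ge_one[of ts] by auto
  have "t \<le> t * prod_list ts"
    using mult_left_mono[OF p, of t] t by simp
  then have "t = 1"
    using t tp by linarith
  then show ?case
    using Cons tp by simp
qed

section \<open>Least squares in coordinates\<close>

text \<open>Vectors of R^I are functions on nat, of which only the values on I matter.\<close>
locale least_squares =
  fixes I :: "nat set" and a :: "nat \<Rightarrow> nat \<Rightarrow> real"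
  assumes finite_I: "finite I"
begin

definition dot :: "(nat \<Rightarrow> real) \<Rightarrow> (nat \<Rightarrow> real) \<Rightarrow> real" where
  "dot u v = (\<Sum>i\<in>I. u i * v i)"

definition sqnorm :: "(nat \<Rightarrow> real) \<Rightarrow> real" where
  "sqnorm v = (\<Sum>i\<in>I. (v i)\<^sup>2)"

definition resid :: "(nat \<Rightarrow> real) \<Rightarrow> nat set \<Rightarrow> (nat \<Rightarrow> real) \<Rightarrow> nat \<Rightarrow> real" where
  "resid v K \<beta> = (\<lambda>i. v i - (\<Sum>k\<in>K. \<beta> k * a k i))"

definition normal_eqs :: "(nat \<Rightarrow> real) \<Rightarrow> nat set \<Rightarrow> (nat \<Rightarrow> real) \<Rightarrow> bool" where
  "normal_eqs v K \<beta> \<longleftrightarrow> (\<forall>k\<in>K. dot (resid v K \<beta>) (a k) = 0)"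

definition sqdist :: "(nat \<Rightarrow> real) \<Rightarrow> nat set \<Rightarrow> real" where
  "sqdist v K = (INF \<beta>. sqnorm (resid v K \<beta>))"

lemma dot_commute: "dot u v = dot v u"
  by (simp add: dot_def mult.commute)

lemma sqnorm_eq_dot: "sqnorm v = dot v v"
  by (simp add: dot_def sqnorm_def power2_eq_square)

lemma dot_diff_left: "dot (\<lambda>i. u i - w i) z = dot u z - dot w z"
  by (simp add: dot_def left_diff_distrib sum_subtractf)

lemma dot_scale_left: "dot (\<lambda>i. c * u i) z = c * dot u z"
  by (simp add: dot_def sum_distrib_left mult.assoc)

lemma dot_sum_left: "dot (\<lambda>i. \<Sum>k\<in>K. f k i) z = (\<Sum>k\<in>K. dot (f k) z)"
  by (simp add: dot_def sum_distrib_right sum.swap[of _ K I])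

lemma dot_lincomb_left: "dot (\<lambda>i. \<Sum>k\<in>K. c k * f k i) z = (\<Sum>k\<in>K. c k * dot (f k) z)"
  by (simp add: dot_sum_left dot_scale_left)

lemma sqnorm_cong: "(\<And>i. i \<in> I \<Longrightarrow> u i = u' i) \<Longrightarrow> sqnorm u = sqnorm u'"
  by (simp add: sqnorm_def)

lemma sqnorm_nonneg: "sqnorm v \<ge> 0"
  by (simp add: sqnorm_def sum_nonneg)

lemma sqnorm_eq_0_iff: "sqnorm v = 0 \<longleftrightarrow> (\<forall>i\<in>I. v i = 0)"
  using finite_I by (simp add: sqnorm_def sum_nonneg_eq_0_iff)

lemma dot_eq_0_if_sqnorm_eq_0: "sqnorm v = 0 \<Longrightarrow> dot v w = 0"
  by (simp add: sqnorm_eq_0_iff dot_def)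

lemma sqnorm_ge_component: "i \<in> I \<Longrightarrow> (v i)\<^sup>2 \<le> sqnorm v"
  unfolding sqnorm_def using finite_I by (intro member_le_sum) auto

lemma sqnorm_add: "sqnorm (\<lambda>i. u i + w i) = sqnorm u + 2 * dot u w + sqnorm w"
  by (simp add: sqnorm_def dot_def power2_sum sum.distrib sum_distrib_left mult.assoc)

lemma sqnorm_diff: "sqnorm (\<lambda>i. u i - w i) = sqnorm u - 2 * dot u w + sqnorm w"
  by (simp add: sqnorm_def dot_def power2_diff sum.distrib sum_subtractf sum_distrib_left mult.assoc)

lemma sqnorm_scale: "sqnorm (\<lambda>i. c * u i) = c\<^sup>2 * sqnorm u"
  by (simp add: sqnorm_def power_mult_distrib sum_distrib_left)

lemma sqnorm_unit:
  assumes "j \<in> I"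
  shows "sqnorm (\<lambda>i. if i = j then 1 else 0) = 1"
proof -
  have "sqnorm (\<lambda>i. if i = j then 1 else 0) = (\<Sum>i\<in>I. if i = j then 1 else 0)"
    unfolding sqnorm_def by (rule sum.cong) auto
  then show ?thesis
    using finite_I assms by simp
qed

lemma dot_resid_left: "dot (resid v K \<beta>) w = dot v w - (\<Sum>k\<in>K. \<beta> k * dot (a k) w)"
  unfolding resid_def dot_diff_left dot_lincomb_left ..

lemma resid_zero_extend:
  assumes "finite L" "K \<subseteq> L"
  shows "resid v L (\<lambda>k. if k \<in> K then \<beta> k else 0) = resid v K \<beta>"
proof -
  have "(\<Sum>k\<in>L. (if k \<in> K then \<beta> k else 0) * a k i) = (\<Sum>k\<in>L. if k \<in> K then \<beta> k * a k i else 0)"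
    for i by (rule sum.cong) auto
  also have "\<dots> i = (\<Sum>k\<in>L \<inter> K. \<beta> k * a k i)" for i
    using assms(1) by (simp add: sum.inter_restrict)
  finally have "(\<Sum>k\<in>L. (if k \<in> K then \<beta> k else 0) * a k i) = (\<Sum>k\<in>K. \<beta> k * a k i)" for i
    using assms(2) by (simp add: Int_absorb1)
  then show ?thesis by (simp add: resid_def)
qed

lemma normal_eqs_insert:
  assumes K: "finite K" "x \<notin> K" and v: "normal_eqs v K \<beta>" and ax: "normal_eqs (a x) K \<gamma>"
    and nz: "sqnorm (resid (a x) K \<gamma>) \<noteq> 0"
  defines "c \<equiv> dot (resid v K \<beta>) (resid (a x) K \<gamma>) / sqnorm (resid (a x) K \<gamma>)"
  defines "\<beta>' \<equiv> (\<lambda>l. if l = x then c else \<beta> l - c * \<gamma> l)"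
  shows "resid v (insert x K) \<beta>' = (\<lambda>i. resid v K \<beta> i - c * resid (a x) K \<gamma> i)"
    and "normal_eqs v (insert x K) \<beta>'"
proof -
  let ?r = "resid v K \<beta>" and ?y = "resid (a x) K \<gamma>"
  let ?z = "\<lambda>i. ?r i - c * ?y i"
  have "(\<Sum>k\<in>K. \<beta>' k * a k i) = (\<Sum>k\<in>K. (\<beta> k - c * \<gamma> k) * a k i)" for i
    using K by (auto simp: \<beta>'_def intro!: sum.cong)
  then have sK: "(\<Sum>k\<in>K. \<beta>' k * a k i) = (\<Sum>k\<in>K. \<beta> k * a k i) - c * (\<Sum>k\<in>K. \<gamma> k * a k i)"
    for i by (simp add: left_diff_distrib sum_subtractf sum_distrib_left mult.assoc)
  have "\<beta>' x = c"
    by (simp add: \<beta>'_def)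
  then have "resid v (insert x K) \<beta>' i = v i - (c * a x i + (\<Sum>k\<in>K. \<beta>' k * a k i))" for i
    using K by (simp add: resid_def)
  then show z: "resid v (insert x K) \<beta>' = ?z"
    by (simp add: sK resid_def fun_eq_iff algebra_simps)
  have zK: "dot ?z (a k) = 0" if "k \<in> K" for k
    using v ax that by (simp add: normal_eqs_def dot_diff_left dot_scale_left)
  have "dot ?z ?y = dot ?r ?y - c * sqnorm ?y"
    by (simp only: dot_diff_left dot_scale_left sqnorm_eq_dot)
  then have zy: "dot ?z ?y = 0"
    using nz by (simp add: c_def)
  have "dot ?z (a x) = dot ?y ?z + (\<Sum>k\<in>K. \<gamma> k * dot (a k) ?z)"
    by (simp add: dot_resid_left dot_commute[of ?z])
  also have "\<dots> = 0"
    using zy zK by (simp add: dot_commute)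
  finally show "normal_eqs v (insert x K) \<beta>'"
    using zK by (simp add: normal_eqs_def z)
qed

lemma normal_eqs_exist: "finite K \<Longrightarrow> \<exists>\<beta>. normal_eqs v K \<beta>"
proof (induction K arbitrary: v rule: finite_induct)
  case empty
  then show ?case by (simp add: normal_eqs_def)
next
  case (insert x K)
  obtain \<beta> where v: "normal_eqs v K \<beta>" using insert.IH by blast
  obtain \<gamma> where ax: "normal_eqs (a x) K \<gamma>" using insert.IH by blast
  show ?case
  proof (cases "sqnorm (resid (a x) K \<gamma>) = 0")
    case False
    then show ?thesis using normal_eqs_insert(2)[OF insert.hyps v ax] by blast
  next
    case True
    \<comment> \<open>then a x lies in the span of the a k, k \<in> K, and the coefficient of x can be 0\<close>
    have "(\<Sum>k\<in>K. (\<beta>(x := 0)) k * a k i) = (\<Sum>k\<in>K. \<beta> k * a k i)" for i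
      using insert.hyps(2) by (intro sum.cong) auto
    then have r: "resid v (insert x K) (\<beta>(x := 0)) = resid v K \<beta>"
      using insert.hyps by (simp add: resid_def)
    have "dot (a x) (resid v K \<beta>) = dot (resid (a x) K \<gamma>) (resid v K \<beta>)
        + (\<Sum>k\<in>K. \<gamma> k * dot (a k) (resid v K \<beta>))"
      by (simp add: dot_resid_left)
    then have "dot (a x) (resid v K \<beta>) = 0"
      using v dot_eq_0_if_sqnorm_eq_0[OF True] by (simp add: normal_eqs_def dot_commute)
    then have "normal_eqs v (insert x K) (\<beta>(x := 0))"
      using v by (simp add: normal_eqs_def r dot_commute)
    then show ?thesis by blast
  qed
qed

lemma sqnorm_resid_pythagoras:
  assumes "normal_eqs v K \<beta>"
  shows "sqnorm (resid v K \<beta>') = sqnorm (resid v K \<beta>) + sqnorm (\<lambda>i. \<Sum>k\<in>K. (\<beta> k - \<beta>' k) * a k i)"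
proof -
  let ?d = "\<lambda>i. \<Sum>k\<in>K. (\<beta> k - \<beta>' k) * a k i"
  have "resid v K \<beta>' = (\<lambda>i. resid v K \<beta> i + ?d i)"
    by (auto simp: resid_def left_diff_distrib sum_subtractf)
  moreover have "dot (resid v K \<beta>) ?d = 0"
    using assms by (simp add: dot_commute[of _ ?d] dot_lincomb_left normal_eqs_def dot_commute[of "a _"])
  ultimately show ?thesis by (simp add: sqnorm_add)
qed

lemma sqdist_eq_sqnorm_resid:
  assumes "normal_eqs v K \<beta>"
  shows "sqdist v K = sqnorm (resid v K \<beta>)"
  unfolding sqdist_def
proof (rule cInf_eq_minimum)
  fix r assume "r \<in> range (\<lambda>\<beta>'. sqnorm (resid v K \<beta>'))"
  then obtain \<beta>' where "r = sqnorm (resid v K \<beta>')" by blast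
  then show "sqnorm (resid v K \<beta>) \<le> r"
    using sqnorm_resid_pythagoras[OF assms, of \<beta>'] sqnorm_nonneg by simp
qed simp

lemma sqdist_attained:
  "finite K \<Longrightarrow> \<exists>\<beta>. normal_eqs v K \<beta> \<and> sqdist v K = sqnorm (resid v K \<beta>)"
  using normal_eqs_exist sqdist_eq_sqnorm_resid by blast

lemma sqdist_le: "sqdist v K \<le> sqnorm (resid v K \<beta>)"
  unfolding sqdist_def by (rule cINF_lower) (auto intro: bdd_belowI2 sqnorm_nonneg)

lemma sqdist_nonneg: "sqdist v K \<ge> 0"
  unfolding sqdist_def by (rule cINF_greatest) (auto simp: sqnorm_nonneg)

lemma sqdist_antimono:
  assumes "finite L" "K \<subseteq> L"
  shows "sqdist v L \<le> sqdist v K"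
proof -
  obtain \<beta> where "sqdist v K = sqnorm (resid v K \<beta>)"
    using sqdist_attained assms finite_subset by blast
  then show ?thesis
    using sqdist_le[of v L "\<lambda>k. if k \<in> K then \<beta> k else 0"] resid_zero_extend[OF assms] by simp
qed

lemma sqdist_member:
  assumes "finite K" "x \<in> K"
  shows "sqdist (a x) K = 0"
proof -
  have "(\<Sum>k\<in>K. (if k = x then 1 else 0) * a k i) = (\<Sum>k\<in>K. if k = x then a k i else 0)" for i
    by (rule sum.cong) auto
  then have "(\<Sum>k\<in>K. (if k = x then 1 else 0) * a k i) = a x i" for i
    using assms by simp
  then have "sqnorm (resid (a x) K (\<lambda>k. if k = x then 1 else 0)) = 0"
    by (simp add: resid_def sqnorm_def)
  then show ?thesis
    using sqdist_le[of "a x" K] sqdist_nonneg[of "a x" K] by (metis order_antisym)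
qed

lemma sqdist_minimizers_agree:
  assumes "finite K" "sqnorm (resid v K \<beta>) = sqdist v K" "sqnorm (resid v K \<beta>') = sqdist v K"
  shows "\<forall>i\<in>I. (\<Sum>k\<in>K. (\<beta> k - \<beta>' k) * a k i) = 0"
proof -
  obtain \<beta>0 where \<beta>0: "normal_eqs v K \<beta>0" "sqdist v K = sqnorm (resid v K \<beta>0)"
    using sqdist_attained[OF assms(1)] by blast
  have "\<forall>i\<in>I. (\<Sum>k\<in>K. (\<beta>0 k - \<beta> k) * a k i) = 0" "\<forall>i\<in>I. (\<Sum>k\<in>K. (\<beta>0 k - \<beta>' k) * a k i) = 0"
    using assms sqnorm_resid_pythagoras[OF \<beta>0(1), of \<beta>] sqnorm_resid_pythagoras[OF \<beta>0(1), of \<beta>']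
    by (simp_all add: \<beta>0(2) flip: sqnorm_eq_0_iff)
  then show ?thesis
    by (simp add: left_diff_distrib sum_subtractf)
qed

lemma sqdist_insert_gram:
  assumes K: "finite K" and x: "normal_eqs (a x) K \<gamma>" and y: "normal_eqs (a y) K \<beta>"
  shows "sqnorm (resid (a x) K \<gamma>) * sqdist (a y) (insert x K)
       = sqnorm (resid (a x) K \<gamma>) * sqnorm (resid (a y) K \<beta>) - (dot (resid (a x) K \<gamma>) (resid (a y) K \<beta>))\<^sup>2"
proof (cases "sqnorm (resid (a x) K \<gamma>) = 0")
  case True
  then show ?thesis by (simp add: dot_eq_0_if_sqnorm_eq_0)
next
  case False
  let ?x = "resid (a x) K \<gamma>" and ?y = "resid (a y) K \<beta>"
  have "x \<notin> K"
    using False sqdist_member[OF K] sqdist_eq_sqnorm_resid[OF x] by auto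
  define c where "c = dot ?y ?x / sqnorm ?x"
  note step = normal_eqs_insert[OF K \<open>x \<notin> K\<close> y x False]
  have "sqdist (a y) (insert x K) = sqnorm (\<lambda>i. ?y i - c * ?x i)"
    using sqdist_eq_sqnorm_resid[OF step(2)] step(1) by (simp add: c_def)
  also have "\<dots> = sqnorm ?y - 2 * (c * dot ?y ?x) + c\<^sup>2 * sqnorm ?x"
    by (simp add: sqnorm_diff sqnorm_scale dot_commute[of ?y] dot_scale_left)
  finally show ?thesis
    using False by (simp add: c_def field_simps power2_eq_square dot_commute[of ?y])
qed

text \<open>Both sides are the Gram determinant of the residuals of a x and a y modulo the span of the
  a k, k \<in> K.\<close>
lemma sqdist_insert_commute:
  assumes "finite K"
  shows "sqdist (a x) K * sqdist (a y) (insert x K) = sqdist (a y) K * sqdist (a x) (insert y K)"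
proof -
  obtain \<gamma> where x: "normal_eqs (a x) K \<gamma>" using normal_eqs_exist[OF assms] by blast
  obtain \<beta> where y: "normal_eqs (a y) K \<beta>" using normal_eqs_exist[OF assms] by blast
  show ?thesis
    using sqdist_insert_gram[OF assms x y] sqdist_insert_gram[OF assms y x]
      sqdist_eq_sqnorm_resid[OF x] sqdist_eq_sqnorm_resid[OF y]
    by (simp add: dot_commute[of "resid (a x) K \<gamma>"] mult.commute)
qed

fun sqdists :: "nat set \<Rightarrow> nat list \<Rightarrow> real list" where
  "sqdists V [] = []"
| "sqdists V (x # xs) = sqdist (a x) V # sqdists (insert x V) xs"

lemma sqdists_append: "sqdists V (xs @ ys) = sqdists V xs @ sqdists (V \<union> set xs) ys"
  by (induction xs arbitrary: V) (auto simp: insert_commute)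

lemma length_sqdists [simp]: "length (sqdists V xs) = length xs"
  by (induction xs arbitrary: V) auto

lemma sqdists_nonneg: "t \<in> set (sqdists V xs) \<Longrightarrow> t \<ge> 0"
  by (induction xs arbitrary: V) (auto simp: sqdist_nonneg)

lemma prod_sqdists_swap:
  "finite V \<Longrightarrow> prod_list (sqdists V (x # y # xs)) = prod_list (sqdists V (y # x # xs))"
  using sqdist_insert_commute[of V x y] by (simp add: insert_commute mult.assoc[symmetric])

lemma prod_sqdists_rotate:
  "finite V \<Longrightarrow> prod_list (sqdists V (x # xs)) = prod_list (sqdists V (xs @ [x]))"
proof (induction xs arbitrary: V)
  case Nil
  then show ?case by simp
next
  case (Cons y xs)
  have "prod_list (sqdists V (x # y # xs)) = sqdist (a y) V * prod_list (sqdists (insert y V) (x # xs))"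
    using prod_sqdists_swap[OF Cons.prems] by simp
  also have "\<dots> = prod_list (sqdists V ((y # xs) @ [x]))"
    using Cons by simp
  finally show ?case .
qed

lemma sqdists_ge_one_insert:
  "finite V \<Longrightarrow> \<forall>t\<in>set (sqdists (insert x V) xs). 1 \<le> t \<Longrightarrow> \<forall>t\<in>set (sqdists V xs). 1 \<le> t"
proof (induction xs arbitrary: V)
  case Nil
  then show ?case by simp
next
  case (Cons y xs)
  have "sqdist (a y) (insert x V) \<le> sqdist (a y) V"
    using Cons.prems(1) by (intro sqdist_antimono) auto
  moreover have "\<forall>t\<in>set (sqdists (insert y V) xs). 1 \<le> t"
    using Cons.prems Cons.IH[of "insert y V"] by (simp add: insert_commute)
  ultimately show ?case
    using Cons.prems by auto
qed

lemma sum_sqdists_le: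
  "topo_order E V xs \<Longrightarrow> finite V \<Longrightarrow>
    sum_list (sqdists V xs) \<le> sum_list (map (\<lambda>x. sqdist (a x) (pa E x)) xs)"
proof (induction xs arbitrary: V)
  case (Cons x xs)
  then have "sqdist (a x) V \<le> sqdist (a x) (pa E x)"
    by (intro sqdist_antimono) auto
  moreover have "sum_list (sqdists (insert x V) xs) \<le> sum_list (map (\<lambda>x. sqdist (a x) (pa E x)) xs)"
    using Cons by simp
  ultimately show ?case by simp
qed simp

end

section \<open>Linear structural equation models\<close>

text \<open>In a linear SEM with unit noise weights, a j lists the coefficients of X_j in the noise
  variables, so that a_j = e_j + \<Sum>_{k \<in> pa(j)} B_kj a_k.\<close>
locale linear_sem = least_squares +
  fixes Es :: "(nat \<times> nat) set" and B :: "nat \<Rightarrow> nat \<Rightarrow> real"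
  assumes Es_subset: "Es \<subseteq> I \<times> I" and acyclic_Es: "acyclic Es"
    and coeffs_eq: "\<And>j i. j \<in> I \<Longrightarrow> i \<in> I \<Longrightarrow>
      a j i = (if i = j then 1 else 0) + (\<Sum>k\<in>pa Es j. B k j * a k i)"
    and B_nonzero: "\<And>k j. (k, j) \<in> Es \<Longrightarrow> B k j \<noteq> 0"
begin

lemma finite_Es: "finite Es"
  using finite_subset[OF Es_subset] finite_I by blast

lemma wf_Es: "wf Es"
  using finite_acyclic_wf[OF finite_Es acyclic_Es] .

lemma pa_subset: "pa Es j \<subseteq> I"
  using Es_subset by (auto simp: pa_def)

lemma not_ancestor_of_parent:
  assumes "k \<in> pa Es j"
  shows "(j, k) \<notin> Es\<^sup>*"
proof
  assume "(j, k) \<in> Es\<^sup>*"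
  moreover have "(k, j) \<in> Es"
    using assms by (simp add: pa_def)
  ultimately have "(j, j) \<in> Es\<^sup>+"
    by (rule rtrancl_into_trancl1)
  then show False
    using acyclic_Es by (simp add: acyclic_def)
qed

lemma coeff_eq_0_if_not_ancestor:
  assumes "j \<in> I" "i \<in> I" "(i, j) \<notin> Es\<^sup>*"
  shows "a j i = 0"
  using wf_Es assms
proof (induction j rule: wf_induct_rule)
  case (less j)
  have "a k i = 0" if k: "k \<in> pa Es j" for k
  proof -
    have "(k, j) \<in> Es" using k by (simp add: pa_def)
    then have "(i, k) \<notin> Es\<^sup>*" using less.prems(3) by (meson rtrancl_into_rtrancl)
    then show ?thesis using less.IH \<open>(k, j) \<in> Es\<close> k pa_subset less.prems(2) by blast
  qed
  moreover have "i \<noteq> j" using less.prems(3) by auto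
  ultimately show ?case
    using coeffs_eq[OF less.prems(1,2)] by simp
qed

lemma coeff_self:
  assumes "j \<in> I"
  shows "a j j = 1"
proof -
  have "a k j = 0" if "k \<in> pa Es j" for k
    using coeff_eq_0_if_not_ancestor[of k j] not_ancestor_of_parent[OF that] pa_subset that assms
    by blast
  then show ?thesis
    using coeffs_eq[OF assms assms] by simp
qed

lemma resid_parents: "j \<in> I \<Longrightarrow> i \<in> I \<Longrightarrow> resid (a j) (pa Es j) (\<lambda>k. B k j) i = (if i = j then 1 else 0)"
  using coeffs_eq[of j i] by (simp add: resid_def)

text \<open>At the coordinate of a support element m without proper descendants in the support, only
  a m contributes.\<close>
lemma lincomb_eq_0_imp_coeff_eq_0:
  assumes K: "K \<subseteq> I" and zero: "\<forall>i\<in>I. (\<Sum>k\<in>K. c k * a k i) = 0" and "k \<in> K"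
  shows "c k = 0"
proof (rule ccontr)
  let ?Z = "{k\<in>K. c k \<noteq> 0}"
  assume "c k \<noteq> 0"
  then have "k \<in> ?Z" using \<open>k \<in> K\<close> by simp
  obtain m where m: "m \<in> ?Z" and no_desc: "\<And>l. (l, m) \<in> (Es\<inverse>)\<^sup>+ \<Longrightarrow> l \<notin> ?Z"
    using wfE_min[OF wf_trancl[OF finite_acyclic_wf_converse[OF finite_Es acyclic_Es]] \<open>k \<in> ?Z\<close>]
    by blast
  have mI: "m \<in> I" using m K by blast
  have rest: "c l * a l m = 0" if l: "l \<in> K - {m}" for l
  proof (cases "c l = 0")
    case False
    then have "(l, m) \<notin> (Es\<inverse>)\<^sup>+"
      using no_desc[of l] l by blast
    then have "(m, l) \<notin> Es\<^sup>*"
      using l by (auto simp: rtrancl_eq_or_trancl trancl_converse)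
    then show ?thesis
      using coeff_eq_0_if_not_ancestor[of l m] mI K l by auto
  qed simp
  have "(\<Sum>l\<in>K. c l * a l m) = c m * a m m + (\<Sum>l\<in>K - {m}. c l * a l m)"
    using m by (intro sum.remove[OF finite_subset[OF K finite_I]]) simp
  also have "(\<Sum>l\<in>K - {m}. c l * a l m) = 0"
    using rest by (intro sum.neutral) blast
  finally show False
    using zero mI m coeff_self[OF mI] by simp
qed

lemma minimizers_coeffs_eq:
  assumes "V \<subseteq> I" "sqnorm (resid v V \<beta>) = sqdist v V" "sqnorm (resid v V \<beta>') = sqdist v V" "k \<in> V"
  shows "\<beta> k = \<beta>' k"
  using lincomb_eq_0_imp_coeff_eq_0[OF assms(1)
      sqdist_minimizers_agree[OF finite_subset[OF assms(1) finite_I] assms(2,3)] assms(4)]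
  by simp

lemma sqdist_le_one:
  assumes "j \<in> I" "pa Es j \<subseteq> K" "K \<subseteq> I"
  shows "sqdist (a j) K \<le> 1"
proof -
  have "sqdist (a j) K \<le> sqdist (a j) (pa Es j)"
    using sqdist_antimono[OF finite_subset[OF assms(3) finite_I] assms(2)] .
  also have "\<dots> \<le> sqnorm (resid (a j) (pa Es j) (\<lambda>k. B k j))"
    by (rule sqdist_le)
  also have "\<dots> = 1"
    using assms(1) by (simp add: sqnorm_cong[OF resid_parents] sqnorm_unit)
  finally show ?thesis .
qed

lemma sqdist_ge_one:
  assumes "j \<in> I" "\<forall>k\<in>K. a k j = 0"
  shows "sqdist (a j) K \<ge> 1"
  unfolding sqdist_def
proof (rule cINF_greatest)
  fix \<beta>
  have "resid (a j) K \<beta> j = 1"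
    using assms by (simp add: resid_def coeff_self)
  then show "1 \<le> sqnorm (resid (a j) K \<beta>)"
    using sqnorm_ge_component[OF assms(1), of "resid (a j) K \<beta>"] by simp
qed simp

lemma parents_subset_if_sqdist_eq_one:
  assumes "V \<subseteq> I" "x \<in> I" "pa Es x \<subseteq> V" "K \<subseteq> V"
    and "sqdist (a x) K = 1" "sqdist (a x) V = 1"
  shows "pa Es x \<subseteq> K"
proof (rule subsetI)
  fix k assume k: "k \<in> pa Es x"
  have fin: "finite V" "finite K"
    using finite_subset[OF assms(1) finite_I] finite_subset[OF assms(4)] by auto
  obtain \<beta> where \<beta>: "sqdist (a x) K = sqnorm (resid (a x) K \<beta>)"
    using sqdist_attained[OF fin(2)] by blast
  let ?\<beta>K = "\<lambda>l. if l \<in> K then \<beta> l else 0"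
  let ?B = "\<lambda>l. if l \<in> pa Es x then B l x else 0"
  \<comment> \<open>both the parent weights and the optimal weights on K are optimal on V\<close>
  have K_opt: "sqnorm (resid (a x) V ?\<beta>K) = sqdist (a x) V"
    using resid_zero_extend[OF fin(1) assms(4), of "a x" \<beta>] \<beta> assms(5,6) by simp
  have B_opt: "sqnorm (resid (a x) V ?B) = sqdist (a x) V"
  proof -
    have "sqnorm (resid (a x) V ?B) = sqnorm (resid (a x) (pa Es x) (\<lambda>l. B l x))"
      using resid_zero_extend[OF fin(1) assms(3), of "a x" "\<lambda>l. B l x"] by simp
    also have "\<dots> = 1"
      using assms(2) by (simp add: sqnorm_cong[OF resid_parents] sqnorm_unit)
    finally show ?thesis
      using assms(6) by simp
  qed
  have "k \<in> V"
    using k assms(3) by blast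
  then have "?\<beta>K k = ?B k"
    by (rule minimizers_coeffs_eq[OF assms(1) K_opt B_opt])
  then have "?\<beta>K k = B k x"
    using k by simp
  moreover have "B k x \<noteq> 0"
    using k B_nonzero by (simp add: pa_def)
  ultimately show "k \<in> K"
    by (metis (full_types))
qed

definition ancestral :: "nat set \<Rightarrow> bool" where
  "ancestral S \<longleftrightarrow> S \<subseteq> I \<and> (\<forall>j\<in>S. pa Es j \<subseteq> S)"

lemma ancestral_ancestor:
  assumes "ancestral S" "(c, k) \<in> Es\<^sup>*" "k \<in> S"
  shows "c \<in> S"
  using assms(2,3)
proof (induction rule: converse_rtrancl_induct)
  case (step y z)
  then show ?case
    using assms(1) by (auto simp: ancestral_def pa_def)
qed

lemma sqdist_sink:
  assumes S: "ancestral S" and j: "j \<in> S" and sink: "\<forall>l\<in>S. (j, l) \<notin> Es"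
  shows "sqdist (a j) (S - {j}) = 1"
proof -
  have jI: "j \<in> I"
    using S j by (auto simp: ancestral_def)
  have "a k j = 0" if k: "k \<in> S - {j}" for k
  proof -
    have "(j, k) \<notin> Es\<^sup>*"
    proof
      assume "(j, k) \<in> Es\<^sup>*"
      then obtain c where "(j, c) \<in> Es" "(c, k) \<in> Es\<^sup>*"
        using k by (auto elim: converse_rtranclE)
      then show False
        using ancestral_ancestor[OF S] k sink by blast
    qed
    then show ?thesis
      using coeff_eq_0_if_not_ancestor[of k j] k S jI by (auto simp: ancestral_def)
  qed
  then have "1 \<le> sqdist (a j) (S - {j})"
    using sqdist_ge_one[OF jI] by blast
  moreover have "pa Es j \<subseteq> S - {j}"
    using S j not_ancestor_of_parent[of j j] by (auto simp: ancestral_def)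
  then have "sqdist (a j) (S - {j}) \<le> 1"
    using S by (intro sqdist_le_one[OF jI]) (auto simp: ancestral_def)
  ultimately show ?thesis by simp
qed

lemma ancestral_remove_sink:
  assumes S: "ancestral S" "S \<noteq> {}" and xs: "distinct xs" "set xs = S"
  obtains u j v where "xs = u @ j # v" "j \<in> I" "pa Es j \<subseteq> S - {j}"
    "sqdist (a j) (S - {j}) = 1" "ancestral (S - {j})"
    "distinct (u @ v)" "set (u @ v) = S - {j}"
proof -
  obtain j where j: "j \<in> S" and sink: "\<And>l. (l, j) \<in> Es\<inverse> \<Longrightarrow> l \<notin> S"
    using wfE_min[OF finite_acyclic_wf_converse[OF finite_Es acyclic_Es]] S(2) by blast
  obtain u v where uv: "xs = u @ j # v"
    using split_list j xs(2) by metis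
  have "distinct (u @ v)" "set (u @ v) = S - {j}"
    using xs uv by auto
  moreover have "sqdist (a j) (S - {j}) = 1"
    using sqdist_sink[OF S(1) j] sink by blast
  moreover have "ancestral (S - {j})"
    using S(1) sink by (auto simp: ancestral_def pa_def)
  moreover have "pa Es j \<subseteq> S - {j}"
    using S(1) j not_ancestor_of_parent[of j j] by (auto simp: ancestral_def)
  moreover have "j \<in> I"
    using S(1) j by (auto simp: ancestral_def)
  ultimately show ?thesis
    using that uv by blast
qed

text \<open>The product is the Gram determinant of the vectors a k, k \<in> S, which is 1 since they are
  unitriangular; it is evaluated by moving a sink of S to the end of the list.\<close>
lemma prod_sqdists_ancestral:
  "ancestral S \<Longrightarrow> distinct xs \<Longrightarrow> set xs = S \<Longrightarrow> prod_list (sqdists {} xs) = 1"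
proof (induction "length xs" arbitrary: xs S rule: less_induct)
  case less
  show ?case
  proof (cases "S = {}")
    case True
    then show ?thesis using less.prems by simp
  next
    case False
    obtain u j v where xs: "xs = u @ j # v" and j: "sqdist (a j) (S - {j}) = 1"
      and rest: "ancestral (S - {j})" "distinct (u @ v)" "set (u @ v) = S - {j}"
      using ancestral_remove_sink[OF less.prems(1) False less.prems(2,3)] by metis
    have "prod_list (sqdists {} (u @ v)) = 1"
      using less.hyps[OF _ rest] xs by simp
    have "prod_list (sqdists {} xs) = prod_list (sqdists {} u) * prod_list (sqdists (set u) (j # v))"
      by (simp add: xs sqdists_append)
    also have "prod_list (sqdists (set u) (j # v)) = prod_list (sqdists (set u) (v @ [j]))"
      by (rule prod_sqdists_rotate) simp
    also have "\<dots> = prod_list (sqdists (set u) v) * sqdist (a j) (S - {j})"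
      using rest(3) by (simp add: sqdists_append Un_commute)
    finally show ?thesis
      using \<open>prod_list (sqdists {} (u @ v)) = 1\<close> j by (simp add: sqdists_append)
  qed
qed

lemma topo_order_if_sqdists_eq_one:
  "ancestral S \<Longrightarrow> distinct xs \<Longrightarrow> set xs = S \<Longrightarrow> \<forall>t\<in>set (sqdists {} xs). t = 1 \<Longrightarrow>
    topo_order Es {} xs"
proof (induction "length xs" arbitrary: xs S rule: less_induct)
  case less
  show ?case
  proof (cases "S = {}")
    case True
    then show ?thesis using less.prems by simp
  next
    case False
    obtain u j v where xs: "xs = u @ j # v" and j: "j \<in> I" "pa Es j \<subseteq> S - {j}"
      "sqdist (a j) (S - {j}) = 1" and rest: "ancestral (S - {j})" "distinct (u @ v)" "set (u @ v) = S - {j}"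
      using ancestral_remove_sink[OF less.prems(1) False less.prems(2,3)] by metis
    have u: "\<forall>t\<in>set (sqdists {} u). t = 1" and ju: "sqdist (a j) (set u) = 1"
      and v: "\<forall>t\<in>set (sqdists (insert j (set u)) v). t = 1"
      using less.prems(4) by (auto simp: xs sqdists_append)
    \<comment> \<open>dropping j can only increase the distances along v, and their product stays 1\<close>
    have "\<forall>t\<in>set (sqdists (set u) v). 1 \<le> t"
      using sqdists_ge_one_insert[of "set u" j v] v by force
    then have "\<forall>t\<in>set (sqdists {} (u @ v)). 1 \<le> t"
      using u by (auto simp: sqdists_append)
    then have "\<forall>t\<in>set (sqdists {} (u @ v)). t = 1"
      using all_one_if_prod_list_eq_one prod_sqdists_ancestral[OF rest] by blast
    then have "topo_order Es {} (u @ v)"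
      using less.hyps[OF _ rest] xs by simp
    moreover have "pa Es j \<subseteq> set u"
      using parents_subset_if_sqdist_eq_one[of "S - {j}" j "set u"] j ju rest
      by (auto simp: ancestral_def)
    ultimately show ?thesis
      by (auto simp: xs topo_order_append intro: topo_order_mono)
  qed
qed

lemma parents_subset_if_sum_sqdists_eq:
  "topo_order E V xs \<Longrightarrow> topo_order Es V xs \<Longrightarrow> V \<subseteq> I \<Longrightarrow> set xs \<subseteq> I \<Longrightarrow>
    \<forall>t\<in>set (sqdists V xs). t = 1 \<Longrightarrow>
    sum_list (sqdists V xs) = sum_list (map (\<lambda>x. sqdist (a x) (pa E x)) xs) \<Longrightarrow>
    \<forall>x\<in>set xs. pa Es x \<subseteq> pa E x"
proof (induction xs arbitrary: V)
  case (Cons x xs)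
  have fin: "finite V"
    using Cons.prems(3) finite_I finite_subset by blast
  have "sqdist (a x) V \<le> sqdist (a x) (pa E x)"
    using Cons.prems(1) fin by (intro sqdist_antimono) auto
  moreover have "sum_list (sqdists (insert x V) xs) \<le> sum_list (map (\<lambda>x. sqdist (a x) (pa E x)) xs)"
    using sum_sqdists_le Cons.prems(1) fin by simp
  ultimately have x: "sqdist (a x) V = sqdist (a x) (pa E x)"
    and xs: "sum_list (sqdists (insert x V) xs) = sum_list (map (\<lambda>x. sqdist (a x) (pa E x)) xs)"
    using Cons.prems(6) by simp_all
  have "pa Es x \<subseteq> pa E x"
    using parents_subset_if_sqdist_eq_one[of V x "pa E x"] Cons.prems x by simp
  moreover have "\<forall>y\<in>set xs. pa Es y \<subseteq> pa E y"
    using Cons.IH[of "insert x V"] Cons.prems xs by simp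
  ultimately show ?case by simp
qed simp

lemma topo_order_with_prod_sqdists_one:
  assumes "E \<subseteq> I \<times> I" "acyclic E"
  obtains xs where "distinct xs" "set xs = I" "topo_order E {} xs"
    "prod_list (sqdists {} xs) = 1" "\<forall>t\<in>set (sqdists {} xs). t > 0"
proof -
  have "wf E"
    using finite_acyclic_wf[OF finite_subset[OF assms(1)] assms(2)] finite_I by blast
  moreover have "\<forall>x\<in>I. pa E x \<subseteq> {} \<union> I"
    using assms(1) by (auto simp: pa_def)
  ultimately obtain xs where xs: "distinct xs" "set xs = I" "topo_order E {} xs"
    using topo_order_exists[OF finite_I] by blast
  moreover have "ancestral I"
    using pa_subset by (simp add: ancestral_def)
  then have prod: "prod_list (sqdists {} xs) = 1"
    using prod_sqdists_ancestral xs by blast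
  moreover have "\<forall>t\<in>set (sqdists {} xs). t > 0"
    using prod sqdists_nonneg prod_list_zero_iff by (metis less_eq_real_def zero_neq_one)
  ultimately show ?thesis
    using that by blast
qed

lemma card_le_sum_sqdist_parents:
  assumes "E \<subseteq> I \<times> I" "acyclic E"
  shows "real (card I) \<le> (\<Sum>j\<in>I. sqdist (a j) (pa E j))"
proof -
  obtain xs where xs: "distinct xs" "set xs = I" "topo_order E {} xs"
    and prod: "prod_list (sqdists {} xs) = 1" "\<forall>t\<in>set (sqdists {} xs). t > 0"
    using topo_order_with_prod_sqdists_one[OF assms] by blast
  have "real (card I) = real (length (sqdists {} xs))"
    using distinct_card[OF xs(1)] xs(2) by simp
  also have "\<dots> \<le> sum_list (sqdists {} xs)"
    using length_le_sum_list_if_prod_list_eq_one(1)[OF prod(2,1)] .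
  also have "\<dots> \<le> sum_list (map (\<lambda>x. sqdist (a x) (pa E x)) xs)"
    using sum_sqdists_le[OF xs(3)] by simp
  also have "\<dots> = (\<Sum>j\<in>I. sqdist (a j) (pa E j))"
    using sum_list_distinct_conv_sum_set[OF xs(1)] xs(2) by simp
  finally show ?thesis .
qed

lemma sum_sqdist_parents_eq_card_iff:
  assumes E: "E \<subseteq> I \<times> I" "acyclic E"
  shows "(\<Sum>j\<in>I. sqdist (a j) (pa E j)) = real (card I) \<longleftrightarrow> Es \<subseteq> E"
proof
  assume eq: "(\<Sum>j\<in>I. sqdist (a j) (pa E j)) = real (card I)"
  obtain xs where xs: "distinct xs" "set xs = I" "topo_order E {} xs"
    and prod: "prod_list (sqdists {} xs) = 1" "\<forall>t\<in>set (sqdists {} xs). t > 0"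
    using topo_order_with_prod_sqdists_one[OF E] by blast
  let ?d = "sqdists {} xs" and ?e = "map (\<lambda>x. sqdist (a x) (pa E x)) xs"
  have "real (length ?d) \<le> sum_list ?d" "sum_list ?d \<le> sum_list ?e"
    using length_le_sum_list_if_prod_list_eq_one(1)[OF prod(2,1)] sum_sqdists_le[OF xs(3)] by simp_all
  moreover have "sum_list ?e = real (length ?d)"
    using eq sum_list_distinct_conv_sum_set[OF xs(1), of "\<lambda>x. sqdist (a x) (pa E x)"]
      distinct_card[OF xs(1)] xs(2) by simp
  ultimately have sums: "sum_list ?d = real (length ?d)" "sum_list ?d = sum_list ?e"
    by linarith+
  then have ones: "\<forall>t\<in>set ?d. t = 1"
    using length_le_sum_list_if_prod_list_eq_one(2)[OF prod(2,1)] by blast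
  moreover have "ancestral I"
    using pa_subset by (simp add: ancestral_def)
  ultimately have "topo_order Es {} xs"
    using topo_order_if_sqdists_eq_one xs(1,2) by blast
  then have "\<forall>x\<in>I. pa Es x \<subseteq> pa E x"
    using parents_subset_if_sum_sqdists_eq[OF xs(3)] ones sums(2) xs(2) by simp
  then show "Es \<subseteq> E"
    using Es_subset by (auto simp: pa_def)
next
  assume "Es \<subseteq> E"
  then have "sqdist (a j) (pa E j) \<le> 1" if "j \<in> I" for j
    using that E(1) by (intro sqdist_le_one) (auto simp: pa_def)
  then have "(\<Sum>j\<in>I. sqdist (a j) (pa E j)) \<le> real (card I)"
    using sum_mono[of I "\<lambda>j. sqdist (a j) (pa E j)" "\<lambda>_. 1"] by simp
  then show "(\<Sum>j\<in>I. sqdist (a j) (pa E j)) = real (card I)"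
    using card_le_sum_sqdist_parents[OF E] by simp
qed

end

section \<open>White noise\<close>

lemma sum_unit_plus_lincomb_mult:
  fixes e :: "nat \<Rightarrow> real"
  assumes "finite I" "j \<in> I"
  shows "(\<Sum>i\<in>I. ((if i = j then 1 else 0) + (\<Sum>k\<in>K. b k * f k i)) * e i)
       = e j + (\<Sum>k\<in>K. b k * (\<Sum>i\<in>I. f k i * e i))"
proof -
  have "(\<Sum>i\<in>I. ((if i = j then 1 else 0) + (\<Sum>k\<in>K. b k * f k i)) * e i)
      = (\<Sum>i\<in>I. if i = j then e i else 0) + (\<Sum>i\<in>I. \<Sum>k\<in>K. b k * (f k i * e i))"
    by (simp add: distrib_right sum.distrib sum_distrib_right mult.assoc if_distrib[of "\<lambda>x. x * _"]
        cong: if_cong)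
  also have "(\<Sum>i\<in>I. if i = j then e i else 0) = e j"
    using assms by simp
  also have "(\<Sum>i\<in>I. \<Sum>k\<in>K. b k * (f k i * e i)) = (\<Sum>k\<in>K. b k * (\<Sum>i\<in>I. f k i * e i))"
    by (simp add: sum.swap[of _ I K] sum_distrib_left)
  finally show ?thesis .
qed

lemma sem_noise_lincomb:
  fixes X eps :: "nat \<Rightarrow> 'a \<Rightarrow> real"
  assumes I: "finite I" and Es: "Es \<subseteq> I \<times> I" "wf Es"
    and sem: "\<And>j \<omega>. j \<in> I \<Longrightarrow> \<omega> \<in> \<Omega> \<Longrightarrow> X j \<omega> = (\<Sum>k\<in>pa Es j. B k j * X k \<omega>) + eps j \<omega>"
    and "j \<in> I"
  shows "\<exists>v. \<forall>\<omega>\<in>\<Omega>. X j \<omega> = (\<Sum>i\<in>I. v i * eps i \<omega>)"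
  using Es(2) \<open>j \<in> I\<close>
proof (induction j rule: wf_induct_rule)
  case (less j)
  have "\<exists>v. \<forall>\<omega>\<in>\<Omega>. X k \<omega> = (\<Sum>i\<in>I. v i * eps i \<omega>)" if "k \<in> pa Es j" for k
  proof -
    have "(k, j) \<in> Es" "k \<in> I"
      using that Es(1) by (auto simp: pa_def)
    then show ?thesis
      by (rule less.IH)
  qed
  then have "\<forall>k\<in>pa Es j. \<exists>v. \<forall>\<omega>\<in>\<Omega>. X k \<omega> = (\<Sum>i\<in>I. v i * eps i \<omega>)"
    by blast
  from bchoice[OF this] obtain f where "\<forall>k\<in>pa Es j. \<forall>\<omega>\<in>\<Omega>. X k \<omega> = (\<Sum>i\<in>I. f k i * eps i \<omega>)"
    by blast
  then have f: "\<And>k \<omega>. k \<in> pa Es j \<Longrightarrow> \<omega> \<in> \<Omega> \<Longrightarrow> X k \<omega> = (\<Sum>i\<in>I. f k i * eps i \<omega>)"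
    by blast
  let ?v = "\<lambda>i. (if i = j then 1 else 0) + (\<Sum>k\<in>pa Es j. B k j * f k i)"
  have "X j \<omega> = (\<Sum>i\<in>I. ?v i * eps i \<omega>)" if "\<omega> \<in> \<Omega>" for \<omega>
  proof -
    have "X j \<omega> = (\<Sum>k\<in>pa Es j. B k j * X k \<omega>) + eps j \<omega>"
      using sem[OF less.prems that] .
    also have "\<dots> = eps j \<omega> + (\<Sum>k\<in>pa Es j. B k j * (\<Sum>i\<in>I. f k i * eps i \<omega>))"
      using f[OF _ that] by (simp add: add.commute)
    also have "\<dots> = (\<Sum>i\<in>I. ((if i = j then 1 else 0) + (\<Sum>k\<in>pa Es j. B k j * f k i)) * eps i \<omega>)"
      by (rule sum_unit_plus_lincomb_mult[OF I less.prems, symmetric])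
    finally show ?thesis .
  qed
  then show ?case
    by (intro exI[of _ ?v]) blast
qed

locale white_noise = prob_space +
  fixes I :: "nat set" and eps :: "nat \<Rightarrow> 'a \<Rightarrow> real" and \<sigma>2 :: real
  assumes finite_I: "finite I"
    and indep_noise: "indep_vars (\<lambda>_. borel) eps I"
    and integrable_noise: "\<And>i. i \<in> I \<Longrightarrow> integrable M (eps i)"
    and integrable_noise_sq: "\<And>i. i \<in> I \<Longrightarrow> integrable M (\<lambda>\<omega>. (eps i \<omega>)\<^sup>2)"
    and noise_mean: "\<And>i. i \<in> I \<Longrightarrow> expectation (eps i) = 0"
    and noise_var: "\<And>i. i \<in> I \<Longrightarrow> expectation (\<lambda>\<omega>. (eps i \<omega>)\<^sup>2) = \<sigma>2"
begin

lemma expectation_noise_mult: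
  assumes "i \<in> I" "k \<in> I"
  shows "integrable M (\<lambda>\<omega>. eps i \<omega> * eps k \<omega>) \<and>
    expectation (\<lambda>\<omega>. eps i \<omega> * eps k \<omega>) = (if i = k then \<sigma>2 else 0)"
proof (cases "i = k")
  case True
  then show ?thesis
    using integrable_noise_sq noise_var assms by (simp_all add: power2_eq_square)
next
  case False
  have ind: "indep_vars (\<lambda>_. borel) eps {i, k}"
    using indep_vars_subset[OF indep_noise] assms by simp
  have int: "\<And>l. l \<in> {i, k} \<Longrightarrow> integrable M (eps l)"
    using integrable_noise assms by auto
  have "(\<Prod>l\<in>{i, k}. eps l \<omega>) = eps i \<omega> * eps k \<omega>" for \<omega>
    using False by simp
  then show ?thesis
    using indep_vars_integrable[OF _ ind int] indep_vars_lebesgue_integral[OF _ ind int]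
      False noise_mean assms by simp_all
qed

lemma expectation_sq_lincomb:
  "expectation (\<lambda>\<omega>. (\<Sum>i\<in>I. c i * eps i \<omega>)\<^sup>2) = \<sigma>2 * (\<Sum>i\<in>I. (c i)\<^sup>2)"
proof -
  have "(\<Sum>i\<in>I. c i * eps i \<omega>)\<^sup>2 = (\<Sum>i\<in>I. \<Sum>k\<in>I. (c i * c k) * (eps i \<omega> * eps k \<omega>))" for \<omega>
    unfolding power2_eq_square sum_product by (intro sum.cong refl) (simp add: algebra_simps)
  then have "expectation (\<lambda>\<omega>. (\<Sum>i\<in>I. c i * eps i \<omega>)\<^sup>2)
      = (\<Sum>i\<in>I. \<Sum>k\<in>I. (c i * c k) * expectation (\<lambda>\<omega>. eps i \<omega> * eps k \<omega>))"
    using expectation_noise_mult by (simp add: integrable_sum integral_sum)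
  also have "\<dots> = (\<Sum>i\<in>I. \<Sum>k\<in>I. if i = k then \<sigma>2 * (c i)\<^sup>2 else 0)"
    using expectation_noise_mult by (intro sum.cong refl) (simp add: power2_eq_square)
  finally show ?thesis
    using finite_I by (simp add: sum_distrib_left)
qed

lemma noise_lincomb_eq_0_imp_coeff_eq_0:
  assumes "\<sigma>2 > 0" "\<And>\<omega>. \<omega> \<in> space M \<Longrightarrow> (\<Sum>i\<in>I. c i * eps i \<omega>) = 0" "i \<in> I"
  shows "c i = 0"
proof -
  have "\<sigma>2 * (\<Sum>i\<in>I. (c i)\<^sup>2) = expectation (\<lambda>\<omega>. (\<Sum>i\<in>I. c i * eps i \<omega>)\<^sup>2)"
    by (simp add: expectation_sq_lincomb)
  also have "\<dots> = 0"
    using assms(2) by (simp cong: Bochner_Integration.integral_cong)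
  finally show ?thesis
    using assms(1,3) finite_I by (simp add: sum_nonneg_eq_0_iff)
qed

lemma sem_coeffs_recursion:
  assumes \<sigma>2: "\<sigma>2 > 0" and Es: "Es \<subseteq> I \<times> I"
    and sem: "\<And>j \<omega>. j \<in> I \<Longrightarrow> \<omega> \<in> space M \<Longrightarrow> X j \<omega> = (\<Sum>k\<in>pa Es j. B k j * X k \<omega>) + eps j \<omega>"
    and rep: "\<And>j \<omega>. j \<in> I \<Longrightarrow> \<omega> \<in> space M \<Longrightarrow> X j \<omega> = (\<Sum>i\<in>I. a j i * eps i \<omega>)"
    and j: "j \<in> I" and i: "i \<in> I"
  shows "a j i = (if i = j then 1 else 0) + (\<Sum>k\<in>pa Es j. B k j * a k i)"
proof -
  let ?c = "\<lambda>i. a j i - ((if i = j then 1 else 0) + (\<Sum>k\<in>pa Es j. B k j * a k i))"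
  have "(\<Sum>i\<in>I. ?c i * eps i \<omega>) = 0" if \<omega>: "\<omega> \<in> space M" for \<omega>
  proof -
    have "(\<Sum>k\<in>pa Es j. B k j * X k \<omega>) = (\<Sum>k\<in>pa Es j. B k j * (\<Sum>i\<in>I. a k i * eps i \<omega>))"
      using rep[OF _ \<omega>] Es by (intro sum.cong) (auto simp: pa_def)
    then have "(\<Sum>i\<in>I. ((if i = j then 1 else 0) + (\<Sum>k\<in>pa Es j. B k j * a k i)) * eps i \<omega>) = X j \<omega>"
      using sem[OF j \<omega>]
        sum_unit_plus_lincomb_mult[OF finite_I j, of "\<lambda>k. B k j" a "pa Es j" "\<lambda>i. eps i \<omega>"]
      by (simp add: add.commute)
    then show ?thesis
      using rep[OF j \<omega>] by (simp add: left_diff_distrib sum_subtractf)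
  qed
  then show ?thesis
    using noise_lincomb_eq_0_imp_coeff_eq_0[OF \<sigma>2 _ i, of ?c] by simp
qed

lemma sem_noise_coeffs:
  assumes \<sigma>2: "\<sigma>2 > 0" and Es: "Es \<subseteq> I \<times> I" "acyclic Es" and B: "\<And>k j. (k, j) \<in> Es \<Longrightarrow> B k j \<noteq> 0"
    and sem: "\<And>j \<omega>. j \<in> I \<Longrightarrow> \<omega> \<in> space M \<Longrightarrow> X j \<omega> = (\<Sum>k\<in>pa Es j. B k j * X k \<omega>) + eps j \<omega>"
  obtains a where "linear_sem I a Es B"
    and "\<And>j \<omega>. j \<in> I \<Longrightarrow> \<omega> \<in> space M \<Longrightarrow> X j \<omega> = (\<Sum>i\<in>I. a j i * eps i \<omega>)"
proof -
  have "wf Es"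
    using finite_acyclic_wf[OF finite_subset[OF Es(1)] Es(2)] finite_I by simp
  then have "\<exists>v. \<forall>\<omega>\<in>space M. X j \<omega> = (\<Sum>i\<in>I. v i * eps i \<omega>)" if "j \<in> I" for j
    using sem_noise_lincomb[of I Es "space M" X B eps j] finite_I Es(1) sem that by blast
  then have "\<forall>j\<in>I. \<exists>v. \<forall>\<omega>\<in>space M. X j \<omega> = (\<Sum>i\<in>I. v i * eps i \<omega>)"
    by blast
  from bchoice[OF this] obtain a where "\<forall>j\<in>I. \<forall>\<omega>\<in>space M. X j \<omega> = (\<Sum>i\<in>I. a j i * eps i \<omega>)"
    by blast
  then have rep: "\<And>j \<omega>. j \<in> I \<Longrightarrow> \<omega> \<in> space M \<Longrightarrow> X j \<omega> = (\<Sum>i\<in>I. a j i * eps i \<omega>)"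
    by blast
  have "linear_sem I a Es B"
  proof
    show "finite I" "Es \<subseteq> I \<times> I" "acyclic Es"
      using finite_I Es by simp_all
  qed (use sem_coeffs_recursion[OF \<sigma>2 Es(1) sem rep] B in blast)+
  then show ?thesis
    using that rep by blast
qed

lemma resid_risk_eq_sqdist:
  assumes rep: "\<And>j \<omega>. j \<in> I \<Longrightarrow> \<omega> \<in> space M \<Longrightarrow> X j \<omega> = (\<Sum>i\<in>I. a j i * eps i \<omega>)"
    and "pa E j \<subseteq> I" "j \<in> I"
  shows "resid_risk M X E j = \<sigma>2 * least_squares.sqdist I a (a j) (pa E j)"
proof -
  interpret L: least_squares I a
    using finite_I by unfold_locales
  let ?K = "pa E j"
  have risk: "expectation (\<lambda>\<omega>. (X j \<omega> - (\<Sum>k\<in>?K. \<beta> k * X k \<omega>))\<^sup>2) = \<sigma>2 * L.sqnorm (L.resid (a j) ?K \<beta>)"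
    for \<beta>
  proof -
    have "X j \<omega> - (\<Sum>k\<in>?K. \<beta> k * X k \<omega>) = (\<Sum>i\<in>I. L.resid (a j) ?K \<beta> i * eps i \<omega>)"
      if \<omega>: "\<omega> \<in> space M" for \<omega>
    proof -
      have "(\<Sum>k\<in>?K. \<beta> k * X k \<omega>) = (\<Sum>k\<in>?K. \<beta> k * (\<Sum>i\<in>I. a k i * eps i \<omega>))"
        using rep[OF _ \<omega>] assms(2) by (intro sum.cong) auto
      also have "\<dots> = (\<Sum>i\<in>I. (\<Sum>k\<in>?K. \<beta> k * a k i) * eps i \<omega>)"
        by (simp add: sum_distrib_left sum_distrib_right sum.swap[of _ ?K I] mult.assoc)
      finally show ?thesis
        using rep[OF assms(3) \<omega>] by (simp add: L.resid_def left_diff_distrib sum_subtractf)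
    qed
    then show ?thesis
      by (simp add: expectation_sq_lincomb L.sqnorm_def cong: Bochner_Integration.integral_cong)
  qed
  have "\<sigma>2 \<ge> 0"
    using noise_var[OF assms(3)] by (metis integral_nonneg_AE zero_le_power2 AE_I2)
  obtain \<beta>0 where \<beta>0: "L.sqdist (a j) ?K = L.sqnorm (L.resid (a j) ?K \<beta>0)"
    using L.sqdist_attained finite_subset[OF assms(2) finite_I] by blast
  have "resid_risk M X E j = (INF \<beta>. \<sigma>2 * L.sqnorm (L.resid (a j) ?K \<beta>))"
    unfolding resid_risk_def risk ..
  also have "\<dots> = \<sigma>2 * L.sqnorm (L.resid (a j) ?K \<beta>0)"
  proof (rule cInf_eq_minimum)
    fix r assume "r \<in> range (\<lambda>\<beta>. \<sigma>2 * L.sqnorm (L.resid (a j) ?K \<beta>))"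
    then obtain \<beta> where "r = \<sigma>2 * L.sqnorm (L.resid (a j) ?K \<beta>)"
      by blast
    then show "\<sigma>2 * L.sqnorm (L.resid (a j) ?K \<beta>0) \<le> r"
      using L.sqdist_le[of "a j" ?K \<beta>] \<beta>0 \<open>\<sigma>2 \<ge> 0\<close> by (simp add: mult_left_mono)
  qed blast
  finally show ?thesis
    using \<beta>0 by simp
qed

end

theorem theorem1:
  fixes M :: "'a measure" and p :: nat and Estar :: "(nat \<times> nat) set"
    and B :: "nat \<Rightarrow> nat \<Rightarrow> real" and eps :: "nat \<Rightarrow> 'a \<Rightarrow> real"
    and X :: "nat \<Rightarrow> 'a \<Rightarrow> real" and \<sigma>2 :: real
  assumes "prob_space M"
    and dag_star: "is_dag p Estar"
    and nonzero: "\<And>k j. (k, j) \<in> Estar \<Longrightarrow> B k j \<noteq> 0"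
    and indep: "prob_space.indep_vars M (\<lambda>_. borel) eps {1..p}"
    and integ: "\<And>j. j \<in> {1..p} \<Longrightarrow> integrable M (eps j)"
    and integ2: "\<And>j. j \<in> {1..p} \<Longrightarrow> integrable M (\<lambda>\<omega>. (eps j \<omega>)\<^sup>2)"
    and mean0: "\<And>j. j \<in> {1..p} \<Longrightarrow> integral\<^sup>L M (eps j) = 0"
    and var: "\<And>j. j \<in> {1..p} \<Longrightarrow>
              integral\<^sup>L M (\<lambda>\<omega>. (eps j \<omega> - integral\<^sup>L M (eps j))\<^sup>2) = \<sigma>2"
    and sigma_pos: "\<sigma>2 > 0"
    and sem: "\<And>j \<omega>. j \<in> {1..p} \<Longrightarrow> \<omega> \<in> space M \<Longrightarrow>
              X j \<omega> = (\<Sum>k\<in>pa Estar j. B k j * X k \<omega>) + eps j \<omega>"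
  shows "total_risk M X p Estar = real p * \<sigma>2 \<and>
         (\<forall>E. is_dag p E \<longrightarrow>
            total_risk M X p E \<ge> total_risk M X p Estar \<and>
            (total_risk M X p E = total_risk M X p Estar \<longleftrightarrow> Estar \<subseteq> E))"
proof -
  define I where "I = {1..p}"
  have dag_iff: "is_dag p E \<longleftrightarrow> E \<subseteq> I \<times> I \<and> acyclic E" for E
    by (simp add: is_dag_def I_def)
  interpret N: white_noise M I eps \<sigma>2
    using \<open>prob_space M\<close> indep integ integ2 mean0 var
    by (simp add: white_noise_def white_noise_axioms_def I_def)
  have Es: "Estar \<subseteq> I \<times> I" "acyclic Estar"
    using dag_star dag_iff by auto
  obtain a where lsem: "linear_sem I a Estar B"
    and rep: "\<And>j \<omega>. j \<in> I \<Longrightarrow> \<omega> \<in> space M \<Longrightarrow> X j \<omega> = (\<Sum>i\<in>I. a j i * eps i \<omega>)"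
    using N.sem_noise_coeffs[OF sigma_pos Es nonzero sem[folded I_def]] by blast
  interpret S: linear_sem I a Estar B
    by (fact lsem)
  have total: "total_risk M X p E = \<sigma>2 * (\<Sum>j\<in>I. S.sqdist (a j) (pa E j))" if "E \<subseteq> I \<times> I" for E
    unfolding total_risk_def I_def[symmetric] sum_distrib_left
    using N.resid_risk_eq_sqdist[where X = X and a = a, OF rep] that
    by (intro sum.cong refl) (auto simp: pa_def)
  have star: "total_risk M X p Estar = real p * \<sigma>2"
    using total[OF Es(1)] S.sum_sqdist_parents_eq_card_iff[OF Es] by (simp add: I_def)
  have "total_risk M X p E \<ge> total_risk M X p Estar \<and>
      (total_risk M X p E = total_risk M X p Estar \<longleftrightarrow> Estar \<subseteq> E)" if "is_dag p E" for E
  proof -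
    have E: "E \<subseteq> I \<times> I" "acyclic E"
      using that dag_iff by auto
    then show ?thesis
      using total[OF E(1)] star S.card_le_sum_sqdist_parents[OF E] S.sum_sqdist_parents_eq_card_iff[OF E]
        sigma_pos by (simp add: I_def mult.commute)
  qed
  with star show ?thesis
    by blast
qed

end
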